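(* Let $D\ge1$, let $Q_D$ be the $D$-dimensional hypercube on $X=\{0,1\}^D$ with adjacency matrix $A$, and let $E_1V$ be the eigenspace of $A$ in $V=\mathbb{R}^X$ for the eigenvalue $D-2$. Every antisymmetric $A$-like matrix $B$ leaves $E_1V$ invariant, and the restriction map $B\mapsto B|_{E_1V}$, from the space of antisymmetric $A$-like matrices to the space of linear maps $T:E_1V\to E_1V$ satisfying $\langle Tu,w\rangle=-\langle u,Tw\rangle$ for all $u,w\in E_1V$, is injective.
   Context: $Q_D$ is the graph with vertex set $X=\{0,1\}^D$, two vertices adjacent iff they differ in exactly one coordinate. Matrices are real with rows and columns indexed by $X$ and act on $V=\mathbb{R}^X$, with inner product $\langle u,w\rangle=u^tw$. A matrix $B$ is $A$-like if $BA=AB$ and $B_{xy}=0$ for all $x,y\in X$ that are neither equal nor adjacent; it is antisymmetric if $B^t=-B$. *)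

theory Defs
  imports Complex_Main "HOL-Library.FuncSet"
begin

text \<open>Vertex set X = {0,1}^D, encoded as boolean lists of length D.
  Vectors in V = R^X and matrices indexed by X are real functions that vanish
  outside X.\<close>

definition cube :: "nat \<Rightarrow> bool list set" where
  "cube D = {xs. length xs = D}"

definition adj :: "nat \<Rightarrow> bool list \<Rightarrow> bool list \<Rightarrow> bool" where
  "adj D x y \<longleftrightarrow> x \<in> cube D \<and> y \<in> cube D \<and> card {i. i < D \<and> x ! i \<noteq> y ! i} = 1"

definition adjM :: "nat \<Rightarrow> bool list \<Rightarrow> bool list \<Rightarrow> real" where
  "adjM D x y = (if adj D x y then 1 else 0)"

definition is_vec :: "nat \<Rightarrow> (bool list \<Rightarrow> real) \<Rightarrow> bool" where
  "is_vec D v \<longleftrightarrow> (\<forall>x. x \<notin> cube D \<longrightarrow> v x = 0)"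

definition is_mat :: "nat \<Rightarrow> (bool list \<Rightarrow> bool list \<Rightarrow> real) \<Rightarrow> bool" where
  "is_mat D B \<longleftrightarrow> (\<forall>x y. x \<notin> cube D \<or> y \<notin> cube D \<longrightarrow> B x y = 0)"

definition matmul :: "nat \<Rightarrow> (bool list \<Rightarrow> bool list \<Rightarrow> real) \<Rightarrow> (bool list \<Rightarrow> bool list \<Rightarrow> real)
    \<Rightarrow> bool list \<Rightarrow> bool list \<Rightarrow> real" where
  "matmul D B C x y = (\<Sum>z\<in>cube D. B x z * C z y)"

definition mvec :: "nat \<Rightarrow> (bool list \<Rightarrow> bool list \<Rightarrow> real) \<Rightarrow> (bool list \<Rightarrow> real) \<Rightarrow> bool list \<Rightarrow> real" where
  "mvec D B v x = (\<Sum>y\<in>cube D. B x y * v y)"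

definition inner_X :: "nat \<Rightarrow> (bool list \<Rightarrow> real) \<Rightarrow> (bool list \<Rightarrow> real) \<Rightarrow> real" where
  "inner_X D u w = (\<Sum>x\<in>cube D. u x * w x)"

definition A_like :: "nat \<Rightarrow> (bool list \<Rightarrow> bool list \<Rightarrow> real) \<Rightarrow> bool" where
  "A_like D B \<longleftrightarrow> is_mat D B \<and> matmul D B (adjM D) = matmul D (adjM D) B \<and>
     (\<forall>x\<in>cube D. \<forall>y\<in>cube D. x \<noteq> y \<and> \<not> adj D x y \<longrightarrow> B x y = 0)"

definition antisymmetric_mat :: "(bool list \<Rightarrow> bool list \<Rightarrow> real) \<Rightarrow> bool" where
  "antisymmetric_mat B \<longleftrightarrow> (\<forall>x y. B y x = - B x y)"

definition E1 :: "nat \<Rightarrow> (bool list \<Rightarrow> real) set" where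
  "E1 D = {v. is_vec D v \<and> mvec D (adjM D) v = (\<lambda>x. (real D - 2) * v x)}"

end

theory Submission
  imports Defs
begin

text \<open>An A-like matrix commutes with A, hence preserves its eigenspaces, and antisymmetry makes it
  skew-adjoint. For injectivity, comparing the diagonal entries of BA and AB shows that every
  row sum of an antisymmetric A-like B vanishes. The sign vectors
  \<open>f\<^sub>i x = (-1)^(x\<^sub>i)\<close> lie in \<open>E\<^sub>1V\<close>, and since B is supported on
  edges and has zero row sums, \<open>(B f\<^sub>i) x = -2 f\<^sub>i x B x x'\<close> where \<open>x'\<close> is \<open>x\<close> with
  coordinate \<open>i\<close> flipped. So \<open>B|\<^bsub>E\<^sub>1V\<^esub>\<close> determines every entry of B.\<close>

lemma finite_cube: "finite (cube D)"
proof -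
  have "cube D = {xs. set xs \<subseteq> (UNIV::bool set) \<and> length xs = D}" by (auto simp: cube_def)
  then show ?thesis using finite_lists_length_eq[of "UNIV::bool set" D] by simp
qed

lemma mvec_matmul: "mvec D (matmul D M N) v = mvec D M (mvec D N v)"
proof
  fix x
  have "mvec D (matmul D M N) v x = (\<Sum>y\<in>cube D. \<Sum>z\<in>cube D. M x z * N z y * v y)"
    unfolding mvec_def matmul_def by (simp add: sum_distrib_right)
  also have "\<dots> = (\<Sum>z\<in>cube D. \<Sum>y\<in>cube D. M x z * N z y * v y)" by (rule sum.swap)
  also have "\<dots> = mvec D M (mvec D N v) x"
    unfolding mvec_def by (simp add: sum_distrib_left mult.assoc)
  finally show "mvec D (matmul D M N) v x = mvec D M (mvec D N v) x" .
qed

lemma mvec_scale: "mvec D M (\<lambda>x. c * v x) = (\<lambda>x. c * mvec D M v x)"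
  unfolding mvec_def by (simp add: sum_distrib_left algebra_simps)

lemma is_vec_mvec: "is_mat D M \<Longrightarrow> is_vec D (mvec D M v)"
  by (simp add: is_vec_def mvec_def is_mat_def)

lemma commuting_mvec_in_E1:
  assumes "is_mat D B" "matmul D B (adjM D) = matmul D (adjM D) B" "v \<in> E1 D"
  shows "mvec D B v \<in> E1 D"
proof -
  have "mvec D (adjM D) (mvec D B v) = mvec D (matmul D B (adjM D)) v"
    by (simp add: assms(2) mvec_matmul)
  also have "\<dots> = mvec D B (mvec D (adjM D) v)"
    by (rule mvec_matmul)
  also have "\<dots> = (\<lambda>x. (real D - 2) * mvec D B v x)"
    using assms(3) by (simp add: E1_def mvec_scale)
  finally show ?thesis using is_vec_mvec[OF assms(1)] by (simp add: E1_def)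
qed

lemma antisymmetric_mat_diag:
  assumes "antisymmetric_mat B"
  shows "B x x = 0"
proof -
  have "B x x = - B x x" using assms unfolding antisymmetric_mat_def by blast
  then show ?thesis by simp
qed

lemma inner_X_mvec_antisymmetric:
  assumes "antisymmetric_mat B"
  shows "inner_X D (mvec D B u) w = - inner_X D u (mvec D B w)"
proof -
  have "inner_X D (mvec D B u) w = (\<Sum>x\<in>cube D. \<Sum>y\<in>cube D. B x y * u y * w x)"
    by (simp add: inner_X_def mvec_def sum_distrib_right)
  also have "\<dots> = (\<Sum>y\<in>cube D. \<Sum>x\<in>cube D. B x y * u y * w x)" by (rule sum.swap)
  also have "\<dots> = (\<Sum>y\<in>cube D. \<Sum>x\<in>cube D. - (u y * (B y x * w x)))"
  proof (intro sum.cong refl)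
    fix x y
    have "B x y = - B y x" using assms unfolding antisymmetric_mat_def by blast
    then show "B x y * u y * w x = - (u y * (B y x * w x))" by simp
  qed
  also have "\<dots> = - inner_X D u (mvec D B w)"
    by (simp add: inner_X_def mvec_def sum_distrib_left sum_negf)
  finally show ?thesis .
qed

definition flip :: "bool list \<Rightarrow> nat \<Rightarrow> bool list" where
  "flip x j = x[j := \<not> x ! j]"

lemma flip_in_cube: "x \<in> cube D \<Longrightarrow> flip x j \<in> cube D"
  by (simp add: cube_def flip_def)

lemma adj_sym: "adj D x y = adj D y x"
proof -
  have "{i. i < D \<and> x ! i \<noteq> y ! i} = {i. i < D \<and> y ! i \<noteq> x ! i}" by auto
  then show ?thesis unfolding adj_def by auto
qed

lemma adj_flip:
  assumes "x \<in> cube D" "j < D"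
  shows "adj D x (flip x j)"
proof -
  have "{k. k < D \<and> x ! k \<noteq> flip x j ! k} = {j}"
    using assms by (auto simp: flip_def cube_def nth_list_update)
  then show ?thesis using assms flip_in_cube[OF assms(1)] unfolding adj_def by simp
qed

lemma adjE:
  assumes "adj D x y"
  obtains j where "j < D" "y = flip x j"
proof -
  have xy: "x \<in> cube D" "y \<in> cube D" and "card {i. i < D \<and> x ! i \<noteq> y ! i} = 1"
    using assms by (auto simp: adj_def)
  then obtain j where j: "{i. i < D \<and> x ! i \<noteq> y ! i} = {j}" by (meson card_1_singletonE)
  have "y = flip x j"
  proof (rule nth_equalityI)
    show "length y = length (flip x j)" using xy by (simp add: cube_def flip_def)
    fix k assume "k < length y"
    then show "y ! k = flip x j ! k"
      using xy j by (cases "k = j") (auto simp: flip_def cube_def nth_list_update)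
  qed
  with j that show ?thesis by blast
qed

lemma flip_eq_flip_iff:
  assumes "x \<in> cube D" "i < D" "j < D"
  shows "flip x i = flip x j \<longleftrightarrow> i = j"
proof
  assume eq: "flip x i = flip x j"
  show "i = j"
  proof (rule ccontr)
    assume "i \<noteq> j"
    then have "flip x i ! i \<noteq> flip x j ! i"
      using assms by (simp add: flip_def cube_def nth_list_update)
    with eq show False by simp
  qed
qed simp

lemma flip_neq:
  assumes "x \<in> cube D" "i < D"
  shows "flip x i \<noteq> x"
proof
  assume "flip x i = x"
  then have "flip x i ! i = x ! i" by simp
  with assms show False by (simp add: flip_def cube_def)
qed

lemma card_neighbours:
  assumes "x \<in> cube D"
  shows "card {y \<in> cube D. adj D x y} = D"
proof -
  have "{y \<in> cube D. adj D x y} = flip x ` {..<D}"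
    using assms adj_flip flip_in_cube by (auto elim: adjE)
  moreover have "inj_on (flip x) {..<D}"
    using flip_eq_flip_iff[OF assms] by (auto simp: inj_on_def)
  ultimately show ?thesis by (simp add: card_image)
qed

lemma adjM_row_sum: "x \<in> cube D \<Longrightarrow> (\<Sum>y\<in>cube D. adjM D x y) = real D"
  by (simp add: adjM_def sum.If_cases finite_cube card_neighbours Int_def)

definition sign_vec :: "nat \<Rightarrow> nat \<Rightarrow> bool list \<Rightarrow> real" where
  "sign_vec D i x = (if x \<in> cube D then (if x ! i then -1 else 1) else 0)"

lemma sign_vec_neighbour:
  assumes "x \<in> cube D" "i < D" "y = x \<or> adj D x y"
  shows "sign_vec D i y = (if y = flip x i then - sign_vec D i x else sign_vec D i x)"
  using assms(3)
proof
  assume "adj D x y"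
  then obtain j where j: "j < D" "y = flip x j" by (rule adjE)
  then show ?thesis
    using assms(1,2) flip_eq_flip_iff[OF assms(1) assms(2) j(1)]
    by (cases "j = i") (auto simp: sign_vec_def flip_def cube_def nth_list_update)
qed (use flip_neq[OF assms(1,2)] in auto)

lemma mvec_sign_vec_local:
  assumes x: "x \<in> cube D" and i: "i < D"
    and local: "\<And>y. y \<in> cube D \<Longrightarrow> M x y \<noteq> 0 \<Longrightarrow> y = x \<or> adj D x y"
  shows "mvec D M (sign_vec D i) x
           = sign_vec D i x * ((\<Sum>y\<in>cube D. M x y) - 2 * M x (flip x i))"
proof -
  have "mvec D M (sign_vec D i) x
      = (\<Sum>y\<in>cube D. sign_vec D i x * M x y
           - 2 * sign_vec D i x * (if y = flip x i then M x y else 0))"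
    unfolding mvec_def
  proof (rule sum.cong)
    fix y assume y: "y \<in> cube D"
    show "M x y * sign_vec D i y
        = sign_vec D i x * M x y - 2 * sign_vec D i x * (if y = flip x i then M x y else 0)"
    proof (cases "M x y = 0")
      case False
      then show ?thesis using sign_vec_neighbour[OF x i local[OF y False]] by simp
    qed auto
  qed simp
  also have "\<dots> = sign_vec D i x * (\<Sum>y\<in>cube D. M x y) - 2 * sign_vec D i x * M x (flip x i)"
    using flip_in_cube[OF x]
    by (simp add: sum_subtractf sum_distrib_left[symmetric] finite_cube)
  also have "\<dots> = sign_vec D i x * ((\<Sum>y\<in>cube D. M x y) - 2 * M x (flip x i))"
    by (simp add: algebra_simps)
  finally show ?thesis .
qed

lemma sign_vec_in_E1:
  assumes "i < D"
  shows "sign_vec D i \<in> E1 D"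
proof -
  have eigen: "mvec D (adjM D) (sign_vec D i) x = (real D - 2) * sign_vec D i x" for x
  proof (cases "x \<in> cube D")
    case True
    have "adjM D x y \<noteq> 0 \<Longrightarrow> y = x \<or> adj D x y" for y
      by (simp add: adjM_def split: if_splits)
    moreover have "adjM D x (flip x i) = 1" using adj_flip[OF True assms] by (simp add: adjM_def)
    ultimately show ?thesis
      using mvec_sign_vec_local[OF True assms, of "adjM D"] adjM_row_sum[OF True]
      by (simp add: algebra_simps)
  next
    case False
    then show ?thesis by (simp add: mvec_def adjM_def adj_def sign_vec_def)
  qed
  have "is_vec D (sign_vec D i)" by (simp add: is_vec_def sign_vec_def)
  then show ?thesis unfolding E1_def using eigen by auto
qed

lemma A_like_local:
  assumes "A_like D B" "x \<in> cube D" "y \<in> cube D" "B x y \<noteq> 0"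
  shows "y = x \<or> adj D x y"
proof -
  have "\<forall>x\<in>cube D. \<forall>y\<in>cube D. x \<noteq> y \<and> \<not> adj D x y \<longrightarrow> B x y = 0"
    using assms(1) unfolding A_like_def by (elim conjE)
  then show ?thesis using assms(2-4) by auto
qed

text \<open>The diagonal entry \<open>(BA)\<^sub>x\<^sub>x\<close> is the row sum of B at \<open>x\<close>, and by antisymmetry
  \<open>(AB)\<^sub>x\<^sub>x\<close> is its negative.\<close>
lemma A_like_antisymmetric_row_sum:
  assumes "A_like D B" "antisymmetric_mat B" "x \<in> cube D"
  shows "(\<Sum>y\<in>cube D. B x y) = 0"
proof -
  have row: "B x z * adjM D z x = B x z" if "z \<in> cube D" for z
    using A_like_local[OF assms(1,3) that] antisymmetric_mat_diag[OF assms(2)]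
    by (auto simp: adjM_def adj_sym)
  have "(\<Sum>y\<in>cube D. B x y) = matmul D B (adjM D) x x"
    by (simp add: matmul_def row)
  also have "\<dots> = matmul D (adjM D) B x x"
    using assms(1) by (simp add: A_like_def)
  also have "\<dots> = (\<Sum>z\<in>cube D. - (B x z * adjM D z x))"
    unfolding matmul_def
  proof (rule sum.cong)
    fix z
    have "B z x = - B x z" using assms(2) unfolding antisymmetric_mat_def by blast
    then show "adjM D x z * B z x = - (B x z * adjM D z x)"
      by (simp add: adjM_def adj_sym[of D x])
  qed simp
  also have "\<dots> = - (\<Sum>y\<in>cube D. B x y)"
    by (simp add: sum_negf row)
  finally show ?thesis by simp
qed

lemma A_like_antisymmetric_mvec_sign_vec:
  assumes "A_like D B" "antisymmetric_mat B" "x \<in> cube D" "i < D"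
  shows "mvec D B (sign_vec D i) x = - 2 * sign_vec D i x * B x (flip x i)"
  using mvec_sign_vec_local[OF assms(3,4), of B] A_like_local[OF assms(1,3)]
    A_like_antisymmetric_row_sum[OF assms(1-3)]
  by simp

lemma A_like_antisymmetric_eqI:
  assumes B1: "A_like D B1" "antisymmetric_mat B1"
    and B2: "A_like D B2" "antisymmetric_mat B2"
    and agree: "\<And>i. i < D \<Longrightarrow> mvec D B1 (sign_vec D i) = mvec D B2 (sign_vec D i)"
  shows "B1 = B2"
proof (intro ext)
  fix x y
  show "B1 x y = B2 x y"
  proof (cases "x \<in> cube D \<and> y \<in> cube D \<and> adj D x y")
    case True
    then obtain i where i: "i < D" "y = flip x i" by (blast elim: adjE)
    have "- 2 * sign_vec D i x * B1 x y = - 2 * sign_vec D i x * B2 x y"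
      using agree[OF i(1)] True i
        A_like_antisymmetric_mvec_sign_vec[OF B1, of x i]
        A_like_antisymmetric_mvec_sign_vec[OF B2, of x i]
      by auto
    moreover have "sign_vec D i x \<noteq> 0" using True by (simp add: sign_vec_def)
    ultimately show ?thesis by simp
  next
    case not_edge: False
    show ?thesis
    proof (cases "x = y")
      case True
      then show ?thesis
        using antisymmetric_mat_diag[OF B1(2), of y] antisymmetric_mat_diag[OF B2(2), of y] by simp
    next
      case False
      have off_edge: "B x y = 0" if "A_like D B" for B
        using that not_edge False unfolding A_like_def is_mat_def by blast
      show ?thesis using off_edge[OF B1(1)] off_edge[OF B2(1)] by simp
    qed
  qed
qed

theorem lemma9p2:
  fixes D :: nat
  assumes "D \<ge> 1"
  shows "(\<forall>B. A_like D B \<and> antisymmetric_mat B \<longrightarrow>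
            (\<forall>v\<in>E1 D. mvec D B v \<in> E1 D) \<and>
            (\<forall>u\<in>E1 D. \<forall>w\<in>E1 D. inner_X D (mvec D B u) w = - inner_X D u (mvec D B w)))
       \<and> inj_on (\<lambda>B. restrict (mvec D B) (E1 D)) {B. A_like D B \<and> antisymmetric_mat B}"
proof (intro conjI allI impI ballI inj_onI)
  fix B v assume "A_like D B \<and> antisymmetric_mat B" "v \<in> E1 D"
  then show "mvec D B v \<in> E1 D"
    by (simp add: A_like_def commuting_mvec_in_E1)
next
  fix B u w assume "A_like D B \<and> antisymmetric_mat B"
  then show "inner_X D (mvec D B u) w = - inner_X D u (mvec D B w)"
    by (simp add: inner_X_mvec_antisymmetric)
next
  fix B1 B2
  assume "B1 \<in> {B. A_like D B \<and> antisymmetric_mat B}" "B2 \<in> {B. A_like D B \<and> antisymmetric_mat B}"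
    and restrictions_eq: "restrict (mvec D B1) (E1 D) = restrict (mvec D B2) (E1 D)"
  moreover have "mvec D B1 (sign_vec D i) = mvec D B2 (sign_vec D i)" if "i < D" for i
    using fun_cong[OF restrictions_eq, of "sign_vec D i"] sign_vec_in_E1[OF that] by simp
  ultimately show "B1 = B2" by (intro A_like_antisymmetric_eqI[of D B1 B2]) auto
qed

end
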